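(* $B(\mathcal Y_+,\mathcal Y_-)\neq0$.
   Context: $d\ge5$. $W(x)=c_0(1+|x|^2)^{-\frac{d-2}{2}}$ with $c_0>0$ so that $-\Delta W=(|x|^{-4}*|W|^2)W$. For real $f$: $L_+f=-\Delta f-(|x|^{-4}*W^2)f-2(|x|^{-4}*(Wf))W$, $L_-f=-\Delta f-(|x|^{-4}*W^2)f$; for $h=h_1+ih_2$, $\mathcal Lh=-L_-h_2+iL_+h_1$; $B(g,h)=\frac12\int(L_+g_1)h_1+\frac12\int(L_-g_2)h_2$. Here $e_0>0$ and $\mathcal Y_\pm\in\mathcal S(\mathbb{R}^d)$ are nonzero radial functions with $\mathcal L\mathcal Y_\pm=\pm e_0\mathcal Y_\pm$ and $\mathcal Y_+=\overline{\mathcal Y_-}$. *)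

theory Defs
  imports "HOL-Analysis.Analysis"
begin

text \<open>Functions on R^d are modelled as functions on real^'n, with d = CARD('n).\<close>

definition pd :: "'n::finite \<Rightarrow> (real^'n \<Rightarrow> 'b::real_normed_vector) \<Rightarrow> real^'n \<Rightarrow> 'b" where
  "pd i f x = vector_derivative (\<lambda>t. f (x + t *\<^sub>R axis i 1)) (at 0)"

primrec pds :: "'n::finite list \<Rightarrow> (real^'n \<Rightarrow> 'b::real_normed_vector) \<Rightarrow> real^'n \<Rightarrow> 'b" where
  "pds [] f = f"
| "pds (i # is) f = pd i (pds is f)"

definition laplacian :: "(real^'n::finite \<Rightarrow> 'b::real_normed_vector) \<Rightarrow> real^'n \<Rightarrow> 'b" where
  "laplacian f x = (\<Sum>i\<in>UNIV. pd i (pd i f) x)"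

definition schwartz :: "(real^'n::finite \<Rightarrow> 'b::real_normed_vector) \<Rightarrow> bool" where
  "schwartz f \<longleftrightarrow>
     (\<forall>is x. pds is f differentiable (at x)) \<and>
     (\<forall>is (k::nat). \<exists>C. \<forall>x. (1 + norm x) ^ k * norm (pds is f x) \<le> C)"

definition radial :: "(real^'n::finite \<Rightarrow> 'b) \<Rightarrow> bool" where
  "radial f \<longleftrightarrow> (\<forall>x y. norm x = norm y \<longrightarrow> f x = f y)"

definition conv4 :: "(real^'n::finite \<Rightarrow> real) \<Rightarrow> real^'n \<Rightarrow> real" where
  "conv4 g x = integral\<^sup>L lborel (\<lambda>y. g y / norm (x - y) ^ 4)"

definition Lplus :: "(real^'n::finite \<Rightarrow> real) \<Rightarrow> (real^'n \<Rightarrow> real) \<Rightarrow> real^'n \<Rightarrow> real" where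
  "Lplus W f x = - laplacian f x - conv4 (\<lambda>y. (W y)\<^sup>2) x * f x
                 - 2 * conv4 (\<lambda>y. W y * f y) x * W x"

definition Lminus :: "(real^'n::finite \<Rightarrow> real) \<Rightarrow> (real^'n \<Rightarrow> real) \<Rightarrow> real^'n \<Rightarrow> real" where
  "Lminus W f x = - laplacian f x - conv4 (\<lambda>y. (W y)\<^sup>2) x * f x"

definition Lop :: "(real^'n::finite \<Rightarrow> real) \<Rightarrow> (real^'n \<Rightarrow> complex) \<Rightarrow> real^'n \<Rightarrow> complex" where
  "Lop W h x = - complex_of_real (Lminus W (\<lambda>y. Im (h y)) x)
               + \<i> * complex_of_real (Lplus W (\<lambda>y. Re (h y)) x)"

definition Bform :: "(real^'n::finite \<Rightarrow> real) \<Rightarrow> (real^'n \<Rightarrow> complex) \<Rightarrow> (real^'n \<Rightarrow> complex) \<Rightarrow> real" where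
  "Bform W g h = 1/2 * integral\<^sup>L lborel (\<lambda>x. Lplus W (\<lambda>y. Re (g y)) x * Re (h x))
               + 1/2 * integral\<^sup>L lborel (\<lambda>x. Lminus W (\<lambda>y. Im (g y)) x * Im (h x))"

end

theory Submission
  imports Defs "HOL-Probability.Sinc_Integral"
begin

text \<open>Write \<open>Y\<^sub>+ = a + i b\<close>. The eigenvalue equation reads \<open>L\<^sub>- b = -e\<^sub>0 a\<close> and
  \<open>L\<^sub>+ a = e\<^sub>0 b\<close>, and since \<open>Y\<^sub>- = conj Y\<^sub>+\<close> one gets \<open>B(Y\<^sub>+, Y\<^sub>-) = e\<^sub>0 \<integral> a b = - \<integral> b L\<^sub>- b\<close>.
  The equation for \<open>W\<close> says \<open>L\<^sub>- W = 0\<close> with \<open>W > 0\<close>, so the ground state substitution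
  \<open>b = W \<cdot> (b / W)\<close> and two integrations by parts give
  \<open>\<integral> b L\<^sub>- b = \<Sum>\<^sub>i \<integral> (W \<partial>\<^sub>i (b / W))\<^sup>2\<close>. If \<open>B\<close> vanished, \<open>b / W\<close> would be locally constant,
  hence (both being radial) \<open>b = c W\<close>; then \<open>L\<^sub>- b = 0\<close> forces \<open>a = 0\<close>, hence \<open>b = 0\<close>,
  contradicting \<open>Y\<^sub>+ \<noteq> 0\<close>.\<close>

section \<open>Decay weights and integration by parts\<close>

lemma integrable_prod_inverse_1_plus_square:
  "integrable lborel (\<lambda>x::'a::euclidean_space. \<Prod>b\<in>Basis. inverse (1 + (x \<bullet> b)^2))"
proof (subst integrable_iff_bounded, intro conjI)
  show "(\<lambda>x::'a. \<Prod>b\<in>Basis. inverse (1 + (x \<bullet> b)^2)) \<in> borel_measurable lborel"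
    by measurable
  have nonneg: "0 \<le> inverse (1 + (x \<bullet> b)^2)" for x :: 'a and b
    by simp
  have "(\<integral>\<^sup>+x. ennreal (norm (\<Prod>b\<in>Basis. inverse (1 + ((x::'a) \<bullet> b)^2))) \<partial>lborel)
      = (\<integral>\<^sup>+x. (\<Prod>b\<in>Basis. ennreal (inverse (1 + ((x::'a) \<bullet> b)^2))) \<partial>lborel)"
    using nonneg by (simp add: prod_nonneg prod_ennreal)
  also have "\<dots> = (\<Prod>b\<in>(Basis::'a set). (\<integral>\<^sup>+x. ennreal (inverse (1 + x^2)) \<partial>lborel))"
    by (rule nn_integral_lborel_prod) auto
  also have "\<dots> < \<infinity>"
    using integrable_inverse_1_plus_square
    by (simp add: set_integrable_def integrable_iff_bounded less_top[symmetric] power_eq_top_ennreal)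
  finally show "(\<integral>\<^sup>+x. ennreal (norm (\<Prod>b\<in>Basis. inverse (1 + ((x::'a) \<bullet> b)^2))) \<partial>lborel) < \<infinity>" .
qed

lemma integrable_inverse_1_plus_norm_power:
  "integrable lborel (\<lambda>x::'a::euclidean_space. inverse ((1 + norm x) ^ (2 * DIM('a))))"
proof (rule Bochner_Integration.integrable_bound[OF integrable_prod_inverse_1_plus_square])
  show "(\<lambda>x::'a. inverse ((1 + norm x) ^ (2 * DIM('a)))) \<in> borel_measurable lborel"
    by measurable
  show "AE x in lborel. norm (inverse ((1 + norm x) ^ (2 * DIM('a))))
        \<le> norm (\<Prod>b\<in>Basis. inverse (1 + ((x::'a) \<bullet> b)^2))"
  proof (intro AE_I2)
    fix x :: 'a
    have "(\<Prod>b\<in>Basis. 1 + (x \<bullet> b)^2) \<le> (\<Prod>b\<in>(Basis::'a set). (1 + norm x)^2)"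
    proof (intro prod_mono conjI)
      fix b :: 'a assume "b \<in> Basis"
      then have "\<bar>x \<bullet> b\<bar> \<le> norm x" by (rule Basis_le_norm)
      then have "(x \<bullet> b)^2 \<le> (norm x)^2"
        by (metis abs_le_square_iff abs_norm_cancel)
      then show "1 + (x \<bullet> b)^2 \<le> (1 + norm x)^2"
        by (simp add: power2_eq_square algebra_simps) (smt (verit) norm_ge_zero)
    qed (auto intro: add_nonneg_nonneg)
    also have "\<dots> = (1 + norm x) ^ (2 * DIM('a))"
      by (simp add: power_mult)
    finally have "inverse ((1 + norm x) ^ (2 * DIM('a))) \<le> inverse (\<Prod>b\<in>Basis. 1 + (x \<bullet> b)^2)"
      by (intro le_imp_inverse_le prod_pos) (auto simp: add_pos_nonneg)
    also have "\<dots> = (\<Prod>b\<in>Basis. inverse (1 + (x \<bullet> b)^2))"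
      using prod_inversef[of "\<lambda>b. 1 + (x \<bullet> b)^2" Basis] by (simp add: o_def)
    finally show "norm (inverse ((1 + norm x) ^ (2 * DIM('a))))
        \<le> norm (\<Prod>b\<in>Basis. inverse (1 + (x \<bullet> b)^2))"
      by (simp add: prod_nonneg)
  qed
qed

lemma inverse_1_plus_norm_add_power_le:
  fixes x y :: "'a::real_normed_vector"
  shows "inverse ((1 + norm (x + y)) ^ K) \<le> (1 + norm y) ^ K * inverse ((1 + norm x) ^ K)"
proof -
  have "norm x \<le> norm (x + y) + norm y"
    by (metis add_diff_cancel_right' norm_triangle_ineq4)
  then have "1 + norm x \<le> (1 + norm y) * (1 + norm (x + y))"
    by (simp add: algebra_simps) (smt (verit) norm_ge_zero mult_nonneg_nonneg)
  then have "(1 + norm x) ^ K \<le> (1 + norm y) ^ K * (1 + norm (x + y)) ^ K"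
    by (metis power_mono power_mult_distrib add_nonneg_nonneg norm_ge_zero zero_le_one)
  then show ?thesis
    by (simp add: field_simps add_pos_nonneg)
qed

definition rapidly_decreasing :: "('a::real_normed_vector \<Rightarrow> real) \<Rightarrow> bool" where
  "rapidly_decreasing f \<longleftrightarrow> (\<forall>k::nat. \<exists>C. \<forall>x. \<bar>f x\<bar> * (1 + norm x) ^ k \<le> C)"

definition poly_bounded :: "('a::real_normed_vector \<Rightarrow> real) \<Rightarrow> bool" where
  "poly_bounded f \<longleftrightarrow> (\<exists>C (N::nat). \<forall>x. \<bar>f x\<bar> \<le> C * (1 + norm x) ^ N)"

lemma rapidly_decreasing_mult_poly_bounded:
  assumes f: "rapidly_decreasing f" and g: "poly_bounded g"
  shows "rapidly_decreasing (\<lambda>x. f x * g x)"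
  unfolding rapidly_decreasing_def
proof
  fix k :: nat
  obtain Cg N where Cg: "\<And>x. \<bar>g x\<bar> \<le> Cg * (1 + norm x) ^ N"
    using g unfolding poly_bounded_def by blast
  obtain Cf where Cf: "\<And>x. \<bar>f x\<bar> * (1 + norm x) ^ (k + N) \<le> Cf"
    using f unfolding rapidly_decreasing_def by blast
  have "Cg \<ge> 0"
    using Cg[of 0] abs_ge_zero[of "g 0"] by (simp del: abs_ge_zero)
  have "\<bar>f x * g x\<bar> * (1 + norm x) ^ k \<le> Cg * Cf" for x
  proof -
    have "\<bar>f x * g x\<bar> * (1 + norm x) ^ k = \<bar>g x\<bar> * (\<bar>f x\<bar> * (1 + norm x) ^ k)"
      by (simp add: abs_mult)
    also have "\<dots> \<le> (Cg * (1 + norm x) ^ N) * (\<bar>f x\<bar> * (1 + norm x) ^ k)"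
      by (intro mult_right_mono Cg) simp
    also have "\<dots> = Cg * (\<bar>f x\<bar> * (1 + norm x) ^ (k + N))"
      by (simp add: power_add algebra_simps)
    also have "\<dots> \<le> Cg * Cf"
      by (intro mult_left_mono Cf \<open>Cg \<ge> 0\<close>)
    finally show ?thesis .
  qed
  then show "\<exists>C. \<forall>x. \<bar>f x * g x\<bar> * (1 + norm x) ^ k \<le> C" by blast
qed

lemma rapidly_decreasing_add:
  assumes f: "rapidly_decreasing f" and g: "rapidly_decreasing g"
  shows "rapidly_decreasing (\<lambda>x. f x + g x)"
  unfolding rapidly_decreasing_def
proof
  fix k :: nat
  obtain C1 where C1: "\<And>x. \<bar>f x\<bar> * (1 + norm x) ^ k \<le> C1"
    using f unfolding rapidly_decreasing_def by blast
  obtain C2 where C2: "\<And>x. \<bar>g x\<bar> * (1 + norm x) ^ k \<le> C2"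
    using g unfolding rapidly_decreasing_def by blast
  have "\<bar>f x + g x\<bar> * (1 + norm x) ^ k \<le> C1 + C2" for x
  proof -
    have "\<bar>f x + g x\<bar> * (1 + norm x) ^ k \<le> (\<bar>f x\<bar> + \<bar>g x\<bar>) * (1 + norm x) ^ k"
      by (intro mult_right_mono) auto
    also have "\<dots> \<le> C1 + C2"
      using C1[of x] C2[of x] by (simp add: algebra_simps)
    finally show ?thesis .
  qed
  then show "\<exists>C. \<forall>x. \<bar>f x + g x\<bar> * (1 + norm x) ^ k \<le> C" by blast
qed

lemma poly_bounded_const: "poly_bounded (\<lambda>x. c)"
  unfolding poly_bounded_def by (rule exI[of _ "\<bar>c\<bar>"], rule exI[of _ 0]) simp

lemma rapidly_decreasing_imp_poly_bounded: "rapidly_decreasing f \<Longrightarrow> poly_bounded f"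
  unfolding rapidly_decreasing_def poly_bounded_def by (metis mult.right_neutral power_0)

lemma rapidly_decreasing_mult:
  "rapidly_decreasing f \<Longrightarrow> rapidly_decreasing g \<Longrightarrow> rapidly_decreasing (\<lambda>x. f x * g x)"
  using rapidly_decreasing_mult_poly_bounded rapidly_decreasing_imp_poly_bounded by blast

lemma rapidly_decreasing_diff:
  assumes "rapidly_decreasing f" "rapidly_decreasing g"
  shows "rapidly_decreasing (\<lambda>x. f x - g x)"
  using rapidly_decreasing_add[OF assms(1) rapidly_decreasing_mult_poly_bounded[OF assms(2),
      OF poly_bounded_const[of "-1"]]]
  by simp

lemma poly_bounded_mult:
  assumes f: "poly_bounded f" and g: "poly_bounded g"
  shows "poly_bounded (\<lambda>x. f x * g x)"
proof -
  obtain C1 N1 where C1: "\<And>x. \<bar>f x\<bar> \<le> C1 * (1 + norm x) ^ N1"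
    using f unfolding poly_bounded_def by blast
  obtain C2 N2 where C2: "\<And>x. \<bar>g x\<bar> \<le> C2 * (1 + norm x) ^ N2"
    using g unfolding poly_bounded_def by blast
  have "\<bar>f x * g x\<bar> \<le> (C1 * C2) * (1 + norm x) ^ (N1 + N2)" for x
  proof -
    have "\<bar>f x * g x\<bar> \<le> (C1 * (1 + norm x) ^ N1) * (C2 * (1 + norm x) ^ N2)"
      unfolding abs_mult by (intro mult_mono C1 C2 abs_ge_zero order_trans[OF abs_ge_zero C1])
    then show ?thesis by (simp add: power_add algebra_simps)
  qed
  then show ?thesis unfolding poly_bounded_def by blast
qed

lemma poly_bounded_add:
  assumes f: "poly_bounded f" and g: "poly_bounded g"
  shows "poly_bounded (\<lambda>x. f x + g x)"
proof -
  obtain C1 N1 where C1: "\<And>x. \<bar>f x\<bar> \<le> C1 * (1 + norm x) ^ N1"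
    using f unfolding poly_bounded_def by blast
  obtain C2 N2 where C2: "\<And>x. \<bar>g x\<bar> \<le> C2 * (1 + norm x) ^ N2"
    using g unfolding poly_bounded_def by blast
  have "C1 \<ge> 0" "C2 \<ge> 0"
    using C1[of 0] C2[of 0] abs_ge_zero[of "f 0"] abs_ge_zero[of "g 0"] by (simp_all del: abs_ge_zero)
  have "\<bar>f x + g x\<bar> \<le> (C1 + C2) * (1 + norm x) ^ (N1 + N2)" for x
  proof -
    have "\<bar>f x + g x\<bar> \<le> C1 * (1 + norm x) ^ N1 + C2 * (1 + norm x) ^ N2"
      using C1[of x] C2[of x] by linarith
    also have "\<dots> \<le> C1 * (1 + norm x) ^ (N1 + N2) + C2 * (1 + norm x) ^ (N1 + N2)"
      by (intro add_mono mult_left_mono power_increasing \<open>C1 \<ge> 0\<close> \<open>C2 \<ge> 0\<close>) auto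
    finally show ?thesis by (simp add: algebra_simps)
  qed
  then show ?thesis unfolding poly_bounded_def by blast
qed

lemma poly_bounded_diff: "poly_bounded f \<Longrightarrow> poly_bounded g \<Longrightarrow> poly_bounded (\<lambda>x. f x - g x)"
  using poly_bounded_add[of f "\<lambda>x. -1 * g x"] poly_bounded_mult[OF poly_bounded_const, of g "-1"]
  by simp

lemma rapidly_decreasing_le_weight:
  assumes "rapidly_decreasing f"
  obtains C where "\<And>x. \<bar>f x\<bar> \<le> C * inverse ((1 + norm x) ^ K)"
proof -
  obtain C where C: "\<And>x. \<bar>f x\<bar> * (1 + norm x) ^ K \<le> C"
    using assms unfolding rapidly_decreasing_def by blast
  have "\<bar>f x\<bar> \<le> C * inverse ((1 + norm x) ^ K)" for x
    using C[of x] by (simp add: field_simps add_pos_nonneg)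
  then show ?thesis using that by blast
qed

lemma rapidly_decreasing_integrable:
  fixes f :: "'a::euclidean_space \<Rightarrow> real"
  assumes "rapidly_decreasing f" "continuous_on UNIV f"
  shows "integrable lborel f"
proof -
  obtain C where C: "\<And>x. \<bar>f x\<bar> \<le> C * inverse ((1 + norm x) ^ (2 * DIM('a)))"
    using rapidly_decreasing_le_weight[OF assms(1)] by blast
  show ?thesis
  proof (rule Bochner_Integration.integrable_bound)
    show "integrable lborel (\<lambda>x::'a. C * inverse ((1 + norm x) ^ (2 * DIM('a))))"
      using integrable_inverse_1_plus_norm_power[where 'a='a] by simp
    show "f \<in> borel_measurable lborel"
      using borel_measurable_continuous_onI[OF assms(2)] by simp
    show "AE x in lborel. norm (f x) \<le> norm (C * inverse ((1 + norm x) ^ (2 * DIM('a))))"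
      using C by (auto intro: order_trans[OF _ abs_ge_self])
  qed
qed

lemma lborel_integral_translate:
  fixes f :: "'a::euclidean_space \<Rightarrow> 'b::{banach, second_countable_topology}"
  assumes "f \<in> borel_measurable borel"
  shows "integral\<^sup>L lborel (\<lambda>x. f (x + c)) = integral\<^sup>L lborel f"
proof -
  have "integral\<^sup>L (distr lborel borel ((+) c)) f = integral\<^sup>L lborel (\<lambda>x. f (c + x))"
    by (rule integral_distr) (simp_all add: assms)
  then show ?thesis
    by (simp add: lborel_distr_plus add.commute)
qed

lemma lborel_integrable_translate:
  fixes f :: "'a::euclidean_space \<Rightarrow> 'b::{banach, second_countable_topology}"
  assumes "integrable lborel f"
  shows "integrable lborel (\<lambda>x. f (x + c))"
proof -
  have "integrable (distr lborel borel ((+) c)) f \<longleftrightarrow> integrable lborel (\<lambda>x. f (c + x))"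
    by (rule integrable_distr_eq) (use assms in simp_all)
  then show ?thesis
    using assms by (simp add: lborel_distr_plus add.commute)
qed

lemma has_real_derivative_along_line_shift:
  fixes f g :: "'a::real_normed_vector \<Rightarrow> real"
  assumes "\<And>x. ((\<lambda>t. f (x + t *\<^sub>R e)) has_real_derivative g x) (at 0)"
  shows "((\<lambda>s. f (x + s *\<^sub>R e)) has_real_derivative g (x + t *\<^sub>R e)) (at t)"
proof -
  have "((\<lambda>s. f ((x + t *\<^sub>R e) + s *\<^sub>R e)) has_real_derivative g (x + t *\<^sub>R e)) (at 0)"
    by (rule assms)
  then have "((\<lambda>s. f (x + (s + t) *\<^sub>R e)) has_real_derivative g (x + t *\<^sub>R e)) (at 0)"
    by (simp add: scaleR_add_left add.assoc add.commute add.left_commute)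
  then show ?thesis
    using DERIV_shift[of "\<lambda>s. f (x + s *\<^sub>R e)" "g (x + t *\<^sub>R e)" 0 t] by simp
qed

text \<open>By the mean value theorem the difference quotient is a value of \<open>G\<close> at a point at most
  \<open>|e|\<close> away, where the decay weight is comparable.\<close>
lemma difference_quotient_le_weight:
  fixes F G :: "'a::real_normed_vector \<Rightarrow> real"
  assumes F_deriv: "\<And>x. ((\<lambda>t. F (x + t *\<^sub>R e)) has_real_derivative G x) (at 0)"
    and G: "\<And>x. \<bar>G x\<bar> \<le> C * inverse ((1 + norm x) ^ K)"
    and h: "0 < h" "h \<le> 1"
  shows "\<bar>(F (x + h *\<^sub>R e) - F x) / h\<bar> \<le> C * (1 + norm e) ^ K * inverse ((1 + norm x) ^ K)"
proof -
  obtain z where z: "0 < z" "z < h"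
    and "F (x + h *\<^sub>R e) - F (x + 0 *\<^sub>R e) = (h - 0) * G (x + z *\<^sub>R e)"
    using MVT2[of 0 h "\<lambda>t. F (x + t *\<^sub>R e)" "\<lambda>t. G (x + t *\<^sub>R e)"] h
      has_real_derivative_along_line_shift[OF F_deriv] by blast
  then have "(F (x + h *\<^sub>R e) - F x) / h = G (x + z *\<^sub>R e)"
    using h by simp
  moreover have "inverse ((1 + norm (x + z *\<^sub>R e)) ^ K) \<le> (1 + norm e) ^ K * inverse ((1 + norm x) ^ K)"
  proof -
    have "inverse ((1 + norm (x + z *\<^sub>R e)) ^ K) \<le> (1 + norm (z *\<^sub>R e)) ^ K * inverse ((1 + norm x) ^ K)"
      by (rule inverse_1_plus_norm_add_power_le)
    also have "\<dots> \<le> (1 + norm e) ^ K * inverse ((1 + norm x) ^ K)"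
      using z h by (intro mult_right_mono power_mono) (auto intro!: mult_left_le_one_le)
    finally show ?thesis .
  qed
  moreover have "C \<ge> 0"
    using G[of 0] abs_ge_zero[of "G 0"] by simp
  ultimately show ?thesis
    using G[of "x + z *\<^sub>R e"] by (simp add: mult.assoc) (meson mult_left_mono order_trans)
qed

text \<open>The difference quotients of \<open>F\<close> in direction \<open>e\<close> all have integral zero by translation
  invariance, and dominated convergence passes to the limit \<open>G\<close>.\<close>
lemma integral_line_derivative_eq_0:
  fixes F G :: "'a::euclidean_space \<Rightarrow> real"
  assumes F: "rapidly_decreasing F" "continuous_on UNIV F"
    and G: "rapidly_decreasing G" "continuous_on UNIV G"
    and F_deriv: "\<And>x. ((\<lambda>t. F (x + t *\<^sub>R e)) has_real_derivative G x) (at 0)"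
  shows "integral\<^sup>L lborel G = 0"
proof -
  define K where "K = 2 * DIM('a)"
  define w where "w x = inverse ((1 + norm x) ^ K)" for x :: 'a
  obtain C where C: "\<And>x. \<bar>G x\<bar> \<le> C * w x"
    using rapidly_decreasing_le_weight[OF G(1)] unfolding w_def by blast
  have [measurable]: "F \<in> borel_measurable borel" "G \<in> borel_measurable borel"
    using F(2) G(2) by (simp_all add: borel_measurable_continuous_onI)
  have int_F: "integrable lborel F"
    using F by (rule rapidly_decreasing_integrable)
  define h where "h n = 1 / real (Suc n)" for n :: nat
  have h_pos: "0 < h n" and h_le: "h n \<le> 1" for n
    unfolding h_def by auto
  define s where "s n x = (F (x + h n *\<^sub>R e) - F x) / h n" for n x
  have "integral\<^sup>L lborel (s n) = 0" for n
    unfolding s_def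
    using lborel_integrable_translate[OF int_F, of "h n *\<^sub>R e"] int_F
    by (simp add: lborel_integral_translate)
  moreover have "(\<lambda>n. integral\<^sup>L lborel (s n)) \<longlonglongrightarrow> integral\<^sup>L lborel G"
  proof (rule integral_dominated_convergence[where w = "\<lambda>x. C * (1 + norm e) ^ K * w x"])
    show "integrable lborel (\<lambda>x. C * (1 + norm e) ^ K * w x)"
      using integrable_inverse_1_plus_norm_power[where 'a='a] unfolding w_def K_def by simp
    show "s n \<in> borel_measurable lborel" for n
      unfolding s_def by measurable
    show "AE x in lborel. (\<lambda>n. s n x) \<longlonglongrightarrow> G x"
    proof (rule AE_I2)
      fix x
      have "((\<lambda>y. (F (x + y *\<^sub>R e) - F x) / y) \<longlongrightarrow> G x) (at 0)"
        using F_deriv[of x] unfolding has_field_derivative_iff by simp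
      moreover have "filterlim h (at 0) sequentially"
      proof -
        have "h = (\<lambda>n. inverse (real (Suc n)))"
          by (simp add: fun_eq_iff h_def divide_inverse)
        then show ?thesis
          using LIMSEQ_inverse_real_of_nat by (simp add: filterlim_at del: of_nat_Suc)
      qed
      ultimately show "(\<lambda>n. s n x) \<longlonglongrightarrow> G x"
        unfolding s_def by (rule filterlim_compose)
    qed
    show "AE x in lborel. norm (s n x) \<le> C * (1 + norm e) ^ K * w x" for n
      unfolding s_def w_def real_norm_def
      by (intro AE_I2 difference_quotient_le_weight[OF F_deriv C[unfolded w_def]] h_pos h_le)
  qed simp_all
  ultimately have "(\<lambda>n. 0) \<longlonglongrightarrow> integral\<^sup>L lborel G"
    by simp
  then show ?thesis
    using LIMSEQ_unique[OF _ tendsto_const] by blast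
qed

section \<open>Partial derivatives along the axes\<close>

lemma has_vector_derivative_pd:
  fixes f :: "real^'n::finite \<Rightarrow> 'b::real_normed_vector"
  assumes "f differentiable (at x)"
  shows "((\<lambda>t. f (x + t *\<^sub>R axis i 1)) has_vector_derivative pd i f x) (at 0)"
proof -
  have "(\<lambda>t::real. x + t *\<^sub>R axis i 1) differentiable (at 0)"
    by (intro derivative_intros)
  from differentiable_chain_at[OF this] assms
  have "(\<lambda>t. f (x + t *\<^sub>R axis i 1)) differentiable (at 0)"
    by (simp add: o_def)
  then show ?thesis
    unfolding pd_def by (simp add: vector_derivative_works)
qed

lemma pd_eqI:
  fixes f :: "real^'n::finite \<Rightarrow> real"
  assumes "((\<lambda>t. f (x + t *\<^sub>R axis i 1)) has_real_derivative D) (at 0)"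
  shows "pd i f x = D"
  using assms unfolding pd_def has_real_derivative_iff_has_vector_derivative
  by (rule vector_derivative_at)

text \<open>Only the pure second derivatives \<open>\<partial>\<^sub>i\<partial>\<^sub>i\<close> are controlled: this is all the Laplacian sees.\<close>
definition axis_C2 :: "(real^'n::finite \<Rightarrow> real) \<Rightarrow> bool" where
  "axis_C2 f \<longleftrightarrow> continuous_on UNIV f \<and>
     (\<forall>i. continuous_on UNIV (pd i f) \<and> continuous_on UNIV (pd i (pd i f))) \<and>
     (\<forall>i x. ((\<lambda>t. f (x + t *\<^sub>R axis i 1)) has_real_derivative pd i f x) (at 0) \<and>
            ((\<lambda>t. pd i f (x + t *\<^sub>R axis i 1)) has_real_derivative pd i (pd i f) x) (at 0))"

lemma axis_C2D:
  assumes "axis_C2 f"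
  shows "continuous_on UNIV f" "continuous_on UNIV (pd i f)" "continuous_on UNIV (pd i (pd i f))"
    and "((\<lambda>t. f (x + t *\<^sub>R axis i 1)) has_real_derivative pd i f x) (at 0)"
    and "((\<lambda>t. pd i f (x + t *\<^sub>R axis i 1)) has_real_derivative pd i (pd i f) x) (at 0)"
  using assms unfolding axis_C2_def by blast+

lemma laplacian_cmult:
  assumes "axis_C2 f"
  shows "laplacian (\<lambda>y. c * f y) x = c * laplacian f x"
proof -
  have "pd i (\<lambda>y. c * f y) = (\<lambda>y. c * pd i f y)" for i
    by (intro ext pd_eqI DERIV_cmult axis_C2D[OF assms])
  moreover have "pd i (\<lambda>y. c * pd i f y) = (\<lambda>y. c * pd i (pd i f) y)" for i
    by (intro ext pd_eqI DERIV_cmult axis_C2D[OF assms])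
  ultimately show ?thesis
    unfolding laplacian_def by (simp add: sum_distrib_left)
qed

lemma schwartz_Im:
  fixes f :: "real^'n::finite \<Rightarrow> complex"
  assumes "schwartz f"
  shows "axis_C2 (\<lambda>x. Im (f x))" and "rapidly_decreasing (\<lambda>x. Im (f x))"
    and "rapidly_decreasing (pd i (\<lambda>x. Im (f x)))"
    and "rapidly_decreasing (pd i (pd i (\<lambda>x. Im (f x))))"
proof -
  have diff: "pds js f differentiable (at x)" for js x
    using assms unfolding schwartz_def by blast
  have deriv: "((\<lambda>t. Im (pds js f (x + t *\<^sub>R axis i 1))) has_real_derivative
      Im (pd i (pds js f) x)) (at 0)" for js i x
    using has_vector_derivative_pd[OF diff] by (simp add: has_field_derivative_Im)
  have pd_Im: "pd i (\<lambda>x. Im (pds js f x)) = (\<lambda>x. Im (pd i (pds js f) x))" for js i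
    by (intro ext pd_eqI deriv)
  have cont: "continuous_on UNIV (\<lambda>x. Im (pds js f x))" for js
    using diff by (intro continuous_intros continuous_at_imp_continuous_on ballI
        differentiable_imp_continuous_within)
  have rapid: "rapidly_decreasing (\<lambda>x. Im (pds js f x))" for js
    unfolding rapidly_decreasing_def
  proof
    fix k :: nat
    obtain C where C: "\<And>x. (1 + norm x) ^ k * norm (pds js f x) \<le> C"
      using assms unfolding schwartz_def by blast
    have "\<bar>Im (pds js f x)\<bar> * (1 + norm x) ^ k \<le> C" for x
      using mult_right_mono[OF abs_Im_le_cmod, of "(1 + norm x) ^ k" "pds js f x"] C[of x]
      by (simp add: mult.commute)
    then show "\<exists>C. \<forall>x. \<bar>Im (pds js f x)\<bar> * (1 + norm x) ^ k \<le> C" by blast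
  qed
  have pd1: "pd i (\<lambda>x. Im (f x)) = (\<lambda>x. Im (pd i f x))" for i
    using pd_Im[where js="[]"] by simp
  have pd2: "pd i (\<lambda>x. Im (pd i f x)) = (\<lambda>x. Im (pd i (pd i f) x))" for i
    using pd_Im[where js="[i]"] by simp
  show "axis_C2 (\<lambda>x. Im (f x))"
    unfolding axis_C2_def pd1 pd2
    using cont[where js="[]"] cont[where js="[_]"] cont[where js="[_, _]"]
      deriv[where js="[]"] deriv[where js="[_]"] by simp
  show "rapidly_decreasing (\<lambda>x. Im (f x))"
    using rapid[where js="[]"] by simp
  show "rapidly_decreasing (pd i (\<lambda>x. Im (f x)))"
    using rapid[where js="[i]"] by (simp add: pd1)
  show "rapidly_decreasing (pd i (pd i (\<lambda>x. Im (f x))))"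
    using rapid[where js="[i, i]"] by (simp add: pd1 pd2)
qed

section \<open>Ground state substitution\<close>

lemma continuous_nonneg_integral_eq_0_imp_eq_0:
  fixes f :: "'a::euclidean_space \<Rightarrow> real"
  assumes "integrable lborel f" "continuous_on UNIV f" "\<And>x. 0 \<le> f x" "integral\<^sup>L lborel f = 0"
  shows "f x = 0"
proof -
  have "AE x in lborel. f x = 0"
    using integral_nonneg_eq_0_iff_AE[OF assms(1)] assms(3,4) by simp
  then have "AE x in lebesgue. x \<in> {x. f x = 0}"
    by (simp add: AE_completion)
  moreover have "closed {x. f x = 0}"
    using assms(2) by (simp add: closed_Collect_eq)
  ultimately show ?thesis
    using mem_closed_if_AE_lebesgue by blast
qed

locale ground_state_form =
  fixes W b :: "real^'n::finite \<Rightarrow> real"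
  assumes W_pos: "\<And>x. 0 < W x"
    and W_C2: "axis_C2 W"
    and log_deriv_bounded: "\<And>i. poly_bounded (\<lambda>x. pd i W x / W x)"
    and second_log_deriv_bounded: "\<And>i. poly_bounded (\<lambda>x. pd i (pd i W) x / W x)"
    and b_C2: "axis_C2 b"
    and b_rapid: "rapidly_decreasing b"
    and pd_b_rapid: "\<And>i. rapidly_decreasing (pd i b)"
    and pd2_b_rapid: "\<And>i. rapidly_decreasing (pd i (pd i b))"
begin

text \<open>\<open>ratio_deriv i = W \<cdot> \<partial>\<^sub>i (b / W)\<close>\<close>
definition ratio_deriv :: "'n \<Rightarrow> real^'n \<Rightarrow> real" where
  "ratio_deriv i x = pd i b x - b x * (pd i W x / W x)"

lemma W_nonzero: "W x \<noteq> 0"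
  using W_pos[of x] by simp

lemma continuous_on_log_deriv:
  "continuous_on UNIV (\<lambda>x. pd i W x / W x)"
  "continuous_on UNIV (\<lambda>x. pd i (pd i W) x / W x)"
  by (intro continuous_intros axis_C2D[OF W_C2] ballI W_nonzero)+

lemma has_real_derivative_log_deriv:
  "((\<lambda>t. pd i W (x + t *\<^sub>R axis i 1) / W (x + t *\<^sub>R axis i 1)) has_real_derivative
     pd i (pd i W) x / W x - (pd i W x / W x)\<^sup>2) (at 0)"
  by (rule DERIV_cong[OF DERIV_divide[OF axis_C2D(5,4)[OF W_C2] W_nonzero]])
    (simp add: W_nonzero field_simps power2_eq_square)

lemma ratio_deriv_rapidly_decreasing: "rapidly_decreasing (ratio_deriv i)"
  and continuous_on_ratio_deriv: "continuous_on UNIV (ratio_deriv i)"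
  unfolding ratio_deriv_def
  by (intro rapidly_decreasing_diff rapidly_decreasing_mult_poly_bounded pd_b_rapid b_rapid
        log_deriv_bounded,
      intro continuous_intros axis_C2D[OF b_C2] continuous_on_log_deriv)

lemma integrable_deriv_b_pd_b:
    "integrable lborel (\<lambda>x. (pd i b x)\<^sup>2 + b x * pd i (pd i b) x)"
  and integral_deriv_b_pd_b:
    "integral\<^sup>L lborel (\<lambda>x. (pd i b x)\<^sup>2 + b x * pd i (pd i b) x) = 0"
proof -
  have F: "rapidly_decreasing (\<lambda>x. b x * pd i b x)" "continuous_on UNIV (\<lambda>x. b x * pd i b x)"
    by (intro rapidly_decreasing_mult b_rapid pd_b_rapid continuous_intros axis_C2D[OF b_C2])+
  have G: "rapidly_decreasing (\<lambda>x. (pd i b x)\<^sup>2 + b x * pd i (pd i b) x)"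
    "continuous_on UNIV (\<lambda>x. (pd i b x)\<^sup>2 + b x * pd i (pd i b) x)"
    unfolding power2_eq_square
    by (intro rapidly_decreasing_add rapidly_decreasing_mult b_rapid pd_b_rapid pd2_b_rapid
        continuous_intros axis_C2D[OF b_C2])+
  have "((\<lambda>t. b (x + t *\<^sub>R axis i 1) * pd i b (x + t *\<^sub>R axis i 1)) has_real_derivative
      (pd i b x)\<^sup>2 + b x * pd i (pd i b) x) (at 0)" for x
    by (rule DERIV_cong[OF DERIV_mult'[OF axis_C2D(4,5)[OF b_C2]]])
      (simp add: power2_eq_square)
  with F G show "integral\<^sup>L lborel (\<lambda>x. (pd i b x)\<^sup>2 + b x * pd i (pd i b) x) = 0"
    by (intro integral_line_derivative_eq_0)
  from G show "integrable lborel (\<lambda>x. (pd i b x)\<^sup>2 + b x * pd i (pd i b) x)"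
    by (rule rapidly_decreasing_integrable)
qed

lemma integrable_deriv_b_sq_log_deriv:
    "integrable lborel (\<lambda>x. 2 * b x * pd i b x * (pd i W x / W x)
       + (b x)\<^sup>2 * (pd i (pd i W) x / W x - (pd i W x / W x)\<^sup>2))"
  and integral_deriv_b_sq_log_deriv:
    "integral\<^sup>L lborel (\<lambda>x. 2 * b x * pd i b x * (pd i W x / W x)
       + (b x)\<^sup>2 * (pd i (pd i W) x / W x - (pd i W x / W x)\<^sup>2)) = 0"
proof -
  have F: "rapidly_decreasing (\<lambda>x. (b x)\<^sup>2 * (pd i W x / W x))"
    "continuous_on UNIV (\<lambda>x. (b x)\<^sup>2 * (pd i W x / W x))"
    unfolding power2_eq_square
    by (intro rapidly_decreasing_mult_poly_bounded rapidly_decreasing_mult b_rapid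
        log_deriv_bounded continuous_intros axis_C2D[OF b_C2] continuous_on_log_deriv)+
  have "poly_bounded (\<lambda>x. pd i (pd i W) x / W x - (pd i W x / W x)\<^sup>2)"
    unfolding power2_eq_square
    by (intro poly_bounded_diff poly_bounded_mult log_deriv_bounded second_log_deriv_bounded)
  then have "rapidly_decreasing (\<lambda>x. (b x * pd i b x) * (2 * (pd i W x / W x))
     + (b x * b x) * (pd i (pd i W) x / W x - (pd i W x / W x)\<^sup>2))"
    by (intro rapidly_decreasing_add rapidly_decreasing_mult_poly_bounded[OF rapidly_decreasing_mult]
        b_rapid pd_b_rapid poly_bounded_mult[OF poly_bounded_const] log_deriv_bounded)
  then have G: "rapidly_decreasing (\<lambda>x. 2 * b x * pd i b x * (pd i W x / W x)
       + (b x)\<^sup>2 * (pd i (pd i W) x / W x - (pd i W x / W x)\<^sup>2))"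
    "continuous_on UNIV (\<lambda>x. 2 * b x * pd i b x * (pd i W x / W x)
       + (b x)\<^sup>2 * (pd i (pd i W) x / W x - (pd i W x / W x)\<^sup>2))"
    by (simp add: power2_eq_square[of "b _"] ac_simps,
        intro continuous_intros axis_C2D[OF b_C2] continuous_on_log_deriv)
  have "((\<lambda>t. (b (x + t *\<^sub>R axis i 1))\<^sup>2 * (pd i W (x + t *\<^sub>R axis i 1) / W (x + t *\<^sub>R axis i 1)))
      has_real_derivative 2 * b x * pd i b x * (pd i W x / W x)
        + (b x)\<^sup>2 * (pd i (pd i W) x / W x - (pd i W x / W x)\<^sup>2)) (at 0)" for x
  proof -
    have "((\<lambda>t. (b (x + t *\<^sub>R axis i 1))\<^sup>2) has_real_derivative 2 * b x * pd i b x) (at 0)"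
      using DERIV_power[OF axis_C2D(4)[OF b_C2], where n=2] by (simp add: ac_simps)
    from DERIV_mult'[OF this has_real_derivative_log_deriv] show ?thesis
      by (rule DERIV_cong) (simp add: algebra_simps)
  qed
  with F G show "integral\<^sup>L lborel (\<lambda>x. 2 * b x * pd i b x * (pd i W x / W x)
       + (b x)\<^sup>2 * (pd i (pd i W) x / W x - (pd i W x / W x)\<^sup>2)) = 0"
    by (intro integral_line_derivative_eq_0)
  from G show "integrable lborel (\<lambda>x. 2 * b x * pd i b x * (pd i W x / W x)
       + (b x)\<^sup>2 * (pd i (pd i W) x / W x - (pd i W x / W x)\<^sup>2))"
    by (rule rapidly_decreasing_integrable)
qed

lemma integrable_ratio_deriv_sq: "integrable lborel (\<lambda>x. (ratio_deriv i x)\<^sup>2)"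
  unfolding power2_eq_square
  by (intro rapidly_decreasing_integrable rapidly_decreasing_mult ratio_deriv_rapidly_decreasing
      continuous_intros continuous_on_ratio_deriv)

text \<open>Pointwise the integrand is \<open>\<Sum>\<^sub>i (ratio_deriv i)\<^sup>2 - \<partial>\<^sub>i (b \<partial>\<^sub>i b) + \<partial>\<^sub>i (b\<^sup>2 \<partial>\<^sub>i W / W)\<close>,
  and the last two terms integrate to zero.\<close>
lemma integral_form_eq_sum_ratio_deriv_sq:
  "integral\<^sup>L lborel (\<lambda>x. b x * (laplacian W x / W x * b x - laplacian b x))
     = (\<Sum>i\<in>UNIV. integral\<^sup>L lborel (\<lambda>x. (ratio_deriv i x)\<^sup>2))"
proof -
  define G1 where "G1 i x = (pd i b x)\<^sup>2 + b x * pd i (pd i b) x" for i x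
  define G2 where "G2 i x = 2 * b x * pd i b x * (pd i W x / W x)
     + (b x)\<^sup>2 * (pd i (pd i W) x / W x - (pd i W x / W x)\<^sup>2)" for i x
  have pointwise: "b x * (laplacian W x / W x * b x - laplacian b x)
      = (\<Sum>i\<in>UNIV. (ratio_deriv i x)\<^sup>2 - G1 i x + G2 i x)" for x
  proof -
    have "b x * (laplacian W x / W x * b x - laplacian b x)
        = (\<Sum>i\<in>UNIV. (b x)\<^sup>2 * (pd i (pd i W) x / W x) - b x * pd i (pd i b) x)"
      by (simp add: laplacian_def sum_subtractf sum_distrib_left sum_divide_distrib
          power2_eq_square algebra_simps)
    also have "\<dots> = (\<Sum>i\<in>UNIV. (ratio_deriv i x)\<^sup>2 - G1 i x + G2 i x)"
      unfolding ratio_deriv_def G1_def G2_def by (simp add: power2_eq_square algebra_simps)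
    finally show ?thesis .
  qed
  have integrable: "integrable lborel (\<lambda>x. (ratio_deriv i x)\<^sup>2)" "integrable lborel (G1 i)"
    "integrable lborel (G2 i)" for i
    unfolding G1_def[abs_def] G2_def[abs_def]
    by (rule integrable_ratio_deriv_sq integrable_deriv_b_pd_b integrable_deriv_b_sq_log_deriv)+
  have "integral\<^sup>L lborel (\<lambda>x. b x * (laplacian W x / W x * b x - laplacian b x))
      = (\<Sum>i\<in>UNIV. integral\<^sup>L lborel (\<lambda>x. (ratio_deriv i x)\<^sup>2 - G1 i x + G2 i x))"
    unfolding pointwise using integrable by (intro Bochner_Integration.integral_sum) auto
  also have "\<dots> = (\<Sum>i\<in>UNIV. integral\<^sup>L lborel (\<lambda>x. (ratio_deriv i x)\<^sup>2))"
    using integrable integral_deriv_b_pd_b integral_deriv_b_sq_log_deriv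
    by (simp add: G1_def[abs_def] G2_def[abs_def])
  finally show ?thesis .
qed

lemma ratio_deriv_eq_0_if_form_eq_0:
  assumes "integral\<^sup>L lborel (\<lambda>x. b x * (laplacian W x / W x * b x - laplacian b x)) = 0"
  shows "ratio_deriv i x = 0"
proof -
  have nonneg: "0 \<le> integral\<^sup>L lborel (\<lambda>x. (ratio_deriv i x)\<^sup>2)" for i
    by (rule Bochner_Integration.integral_nonneg) simp
  have "(\<Sum>i\<in>UNIV. integral\<^sup>L lborel (\<lambda>x. (ratio_deriv i x)\<^sup>2)) = 0"
    using assms unfolding integral_form_eq_sum_ratio_deriv_sq .
  then have "integral\<^sup>L lborel (\<lambda>x. (ratio_deriv i x)\<^sup>2) = 0"
    by (subst (asm) sum_nonneg_eq_0_iff) (simp_all add: nonneg)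
  moreover have "continuous_on UNIV (\<lambda>x. (ratio_deriv i x)\<^sup>2)"
    by (intro continuous_on_power continuous_on_ratio_deriv)
  ultimately have "(ratio_deriv i x)\<^sup>2 = 0"
    by (intro continuous_nonneg_integral_eq_0_imp_eq_0[OF integrable_ratio_deriv_sq]) simp_all
  then show ?thesis
    by simp
qed

lemma proportional_if_radial_ratio_deriv_eq_0:
  assumes "radial W" "radial b" "\<And>i x. ratio_deriv i x = 0"
  obtains c where "\<And>x. b x = c * W x"
proof -
  fix j :: 'n
  define e where "e = (axis j 1 :: real^'n)"
  define u where "u t = b (t *\<^sub>R e) / W (t *\<^sub>R e)" for t
  have "(u has_real_derivative 0) (at t)" for t
  proof -
    have "((\<lambda>s. b (0 + s *\<^sub>R e)) has_real_derivative pd j b (0 + t *\<^sub>R e)) (at t)"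
      "((\<lambda>s. W (0 + s *\<^sub>R e)) has_real_derivative pd j W (0 + t *\<^sub>R e)) (at t)"
      unfolding e_def
      by (rule has_real_derivative_along_line_shift[OF axis_C2D(4)[OF b_C2]]
          has_real_derivative_along_line_shift[OF axis_C2D(4)[OF W_C2]])+
    from DERIV_divide[OF this W_nonzero]
    have "(u has_real_derivative (pd j b (t *\<^sub>R e) * W (t *\<^sub>R e) - b (t *\<^sub>R e) * pd j W (t *\<^sub>R e))
        / (W (t *\<^sub>R e) * W (t *\<^sub>R e))) (at t)"
      unfolding u_def by simp
    moreover have "pd j b (t *\<^sub>R e) * W (t *\<^sub>R e) - b (t *\<^sub>R e) * pd j W (t *\<^sub>R e) = 0"
      using assms(3)[of j "t *\<^sub>R e"] W_nonzero[of "t *\<^sub>R e"]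
      unfolding ratio_deriv_def by (simp add: field_simps)
    ultimately show ?thesis
      by simp
  qed
  then have u_const: "u (norm x) = u 0" for x :: "real^'n"
    using DERIV_isconst_all by blast
  have "b x = u 0 * W x" for x
  proof -
    have "norm (norm x *\<^sub>R e) = norm x"
      by (simp add: e_def)
    then have "b x / W x = u (norm x)"
      using assms(1,2) unfolding radial_def u_def by metis
    then show ?thesis
      using u_const[of x] W_nonzero[of x] by (simp add: field_simps)
  qed
  then show ?thesis
    using that by blast
qed

end

section \<open>The bubble \<open>c\<^sub>0 (1 + |x|\<^sup>2)\<^sup>p\<close>\<close>

lemma has_real_derivative_bracket_powr:
  fixes x :: "real^'n::finite"
  shows "((\<lambda>t. (1 + (norm (x + t *\<^sub>R axis i 1))\<^sup>2) powr q) has_real_derivative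
    2 * q * x$i * (1 + (norm x)\<^sup>2) powr (q - 1)) (at 0)"
proof -
  have norm_sq: "(norm (x + t *\<^sub>R axis i 1))\<^sup>2 = (norm x)\<^sup>2 + 2 * t * x$i + t\<^sup>2" for t
    unfolding power2_norm_eq_inner
    by (simp add: inner_axis inner_axis' inner_commute power2_eq_square algebra_simps)
  have "((\<lambda>t. (1 + ((norm x)\<^sup>2 + 2 * t * x$i + t\<^sup>2)) powr q) has_real_derivative
      q * (1 + ((norm x)\<^sup>2 + 2 * 0 * x$i + 0\<^sup>2)) powr (q - 1) * (0 + (2 * x$i + 2 * 0))) (at 0)"
    by (intro derivative_eq_intros refl) (auto simp: add_pos_nonneg)
  then show ?thesis
    by (simp add: norm_sq algebra_simps)
qed

lemma has_real_derivative_component_mult_bracket_powr: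
  fixes x :: "real^'n::finite"
  shows "((\<lambda>t. (x + t *\<^sub>R axis i 1)$i * (1 + (norm (x + t *\<^sub>R axis i 1))\<^sup>2) powr q)
    has_real_derivative (1 + (norm x)\<^sup>2) powr q + 2 * q * (x$i)\<^sup>2 * (1 + (norm x)\<^sup>2) powr (q - 1))
    (at 0)"
proof -
  have "((\<lambda>t. x$i + t) has_real_derivative 1) (at 0)"
    by (intro derivative_eq_intros) auto
  from DERIV_mult'[OF this has_real_derivative_bracket_powr]
  have "((\<lambda>t. (x$i + t) * (1 + (norm (x + t *\<^sub>R axis i 1))\<^sup>2) powr q) has_real_derivative
      (1 + (norm x)\<^sup>2) powr q + 2 * q * (x$i)\<^sup>2 * (1 + (norm x)\<^sup>2) powr (q - 1)) (at 0)"
    by (rule DERIV_cong) (simp add: power2_eq_square algebra_simps)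
  moreover have "(x + t *\<^sub>R axis i 1)$i = x$i + t" for t
    by simp
  ultimately show ?thesis
    by simp
qed

lemma poly_bounded_bracket_powr: "poly_bounded (\<lambda>x::'a::real_normed_vector. (1 + (norm x)\<^sup>2) powr q)"
proof -
  define N where "N = nat \<lceil>q\<rceil>"
  have "\<bar>(1 + (norm x)\<^sup>2) powr q\<bar> \<le> 1 * (1 + norm x) ^ (2 * N)" for x :: 'a
  proof -
    have "(1 + (norm x)\<^sup>2) powr q \<le> (1 + (norm x)\<^sup>2) powr (real N)"
      unfolding N_def by (intro powr_mono) (simp_all, linarith)
    also have "\<dots> = (1 + (norm x)\<^sup>2) ^ N"
      by (rule powr_realpow) (simp add: add_pos_nonneg)
    also have "\<dots> \<le> ((1 + norm x)\<^sup>2) ^ N"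
      by (intro power_mono) (auto simp: power2_eq_square algebra_simps)
    finally show ?thesis
      by (simp add: power_mult)
  qed
  then show ?thesis
    unfolding poly_bounded_def by blast
qed

lemma poly_bounded_component: "poly_bounded (\<lambda>x::real^'n::finite. x$i)"
  unfolding poly_bounded_def
  by (rule exI[of _ 1], rule exI[of _ 1]) (auto intro: order_trans[OF component_le_norm_cart])

lemma poly_bounded_divide_bracket_powr:
  assumes "poly_bounded f"
  shows "poly_bounded (\<lambda>x. f x / (c * (1 + (norm x)\<^sup>2) powr q))"
proof -
  have "poly_bounded (\<lambda>x. f x * (inverse c * (1 + (norm x)\<^sup>2) powr (- q)))"
    by (intro poly_bounded_mult assms poly_bounded_const poly_bounded_bracket_powr)
  then show ?thesis
    by (simp add: divide_inverse powr_minus mult.commute)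
qed

lemma ground_state_form_bubble:
  fixes Y :: "real^'n::finite \<Rightarrow> complex"
  assumes "c0 > 0" "schwartz Y"
  shows "ground_state_form (\<lambda>x. c0 * (1 + (norm x)\<^sup>2) powr p) (\<lambda>x. Im (Y x))"
proof -
  define W where "W x = c0 * (1 + (norm x)\<^sup>2) powr p" for x :: "real^'n"
  define W' where "W' i x = 2 * c0 * p * (x$i * (1 + (norm x)\<^sup>2) powr (p - 1))"
    for i :: 'n and x :: "real^'n"
  define W'' where "W'' i x = 2 * c0 * p * ((1 + (norm x)\<^sup>2) powr (p - 1)
      + 2 * (p - 1) * (x$i)\<^sup>2 * (1 + (norm x)\<^sup>2) powr (p - 1 - 1))" for i :: 'n and x :: "real^'n"
  have deriv: "((\<lambda>t. W (x + t *\<^sub>R axis i 1)) has_real_derivative W' i x) (at 0)" for i x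
    unfolding W_def W'_def
    by (rule DERIV_cong[OF DERIV_cmult[OF has_real_derivative_bracket_powr]]) (simp add: ac_simps)
  have deriv2: "((\<lambda>t. W' i (x + t *\<^sub>R axis i 1)) has_real_derivative W'' i x) (at 0)" for i x
    unfolding W'_def W''_def
    by (rule DERIV_cmult[OF has_real_derivative_component_mult_bracket_powr])
  have pd_W: "pd i W = W' i" and pd2_W: "pd i (W' i) = W'' i" for i
    by (intro ext pd_eqI deriv deriv2)+
  have "axis_C2 W"
    unfolding axis_C2_def pd_W pd2_W W_def W'_def W''_def
    using deriv deriv2
    by (intro conjI allI continuous_intros) (auto simp: W_def W'_def W''_def add_nonneg_eq_0_iff)
  moreover have "poly_bounded (\<lambda>x. pd i W x / W x)" "poly_bounded (\<lambda>x. pd i (pd i W) x / W x)" for i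
    unfolding pd_W pd2_W W_def W'_def W''_def power2_eq_square[of "_ $ i"]
    by (intro poly_bounded_divide_bracket_powr poly_bounded_mult poly_bounded_add
        poly_bounded_const poly_bounded_component poly_bounded_bracket_powr)+
  moreover have "0 < W x" for x
    unfolding W_def using assms(1) by (intro mult_pos_pos) (auto simp: add_nonneg_eq_0_iff)
  ultimately show ?thesis
    using schwartz_Im[OF assms(2)] unfolding W_def by unfold_locales auto
qed

section \<open>The linearized operators\<close>

lemma Lop_eigenfunction_parts:
  assumes "Lop W Y x = complex_of_real e * Y x"
  shows "Lminus W (\<lambda>y. Im (Y y)) x = - e * Re (Y x)"
    and "Lplus W (\<lambda>y. Re (Y y)) x = e * Im (Y x)"
  using arg_cong[OF assms, of Re] arg_cong[OF assms, of Im] by (simp_all add: Lop_def)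

lemma Bform_cnj_eigenfunction:
  assumes "\<And>x. Lop W Y x = complex_of_real e * Y x"
  shows "Bform W Y (\<lambda>x. cnj (Y x)) = e * integral\<^sup>L lborel (\<lambda>x. Re (Y x) * Im (Y x))"
proof -
  have "(\<lambda>x. Lplus W (\<lambda>y. Re (Y y)) x * Re (cnj (Y x))) = (\<lambda>x. e * (Re (Y x) * Im (Y x)))"
    "(\<lambda>x. Lminus W (\<lambda>y. Im (Y y)) x * Im (cnj (Y x))) = (\<lambda>x. e * (Re (Y x) * Im (Y x)))"
    by (simp_all add: fun_eq_iff Lop_eigenfunction_parts[OF assms])
  then show ?thesis
    unfolding Bform_def by simp
qed

text \<open>The equation satisfied by \<open>W\<close> identifies the convolution potential with \<open>-\<Delta>W / W\<close>,
  so it never has to be evaluated.\<close>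
lemma Lminus_eq_if_ground_state:
  assumes "- laplacian W x = conv4 (\<lambda>y. (W y)\<^sup>2) x * W x" and "W x \<noteq> 0"
  shows "Lminus W f x = laplacian W x / W x * f x - laplacian f x"
proof -
  have "laplacian W x = - (conv4 (\<lambda>y. (W y)\<^sup>2) x * W x)"
    using assms(1) by (metis minus_minus)
  then show ?thesis
    using assms(2) by (simp add: Lminus_def field_simps)
qed

lemma Lplus_zero: "Lplus W (\<lambda>_. 0) x = 0"
  by (simp add: Lplus_def laplacian_def pd_def conv4_def)

theorem corollary2p17:
  fixes W :: "real^'n::finite \<Rightarrow> real" and c0 e0 :: real
    and Yp Ym :: "real^'n \<Rightarrow> complex"
  assumes "CARD('n) \<ge> 5"
    and "c0 > 0"
    and "\<forall>x. W x = c0 * (1 + (norm x)\<^sup>2) powr (- (real CARD('n) - 2) / 2)"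
    and "\<forall>x. - laplacian W x = conv4 (\<lambda>y. (W y)\<^sup>2) x * W x"
    and "e0 > 0"
    and "schwartz Yp" and "schwartz Ym"
    and "radial Yp" and "radial Ym"
    and "Yp \<noteq> (\<lambda>_. 0)" and "Ym \<noteq> (\<lambda>_. 0)"
    and "\<forall>x. Lop W Yp x = complex_of_real e0 * Yp x"
    and "\<forall>x. Lop W Ym x = - complex_of_real e0 * Ym x"
    and "\<forall>x. Yp x = cnj (Ym x)"
  shows "Bform W Yp Ym \<noteq> 0"
proof
  assume "Bform W Yp Ym = 0"
  define a b where "a x = Re (Yp x)" and "b x = Im (Yp x)" for x
  have W_eq: "W = (\<lambda>x. c0 * (1 + (norm x)\<^sup>2) powr (- (real CARD('n) - 2) / 2))"
    using assms(3) by auto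
  interpret ground_state_form W b
    unfolding W_eq b_def[abs_def] using assms(2,6) by (rule ground_state_form_bubble)
  note Lminus_eq = Lminus_eq_if_ground_state[OF assms(4)[rule_format] W_nonzero]
  have eigen: "Lminus W b x = - e0 * a x" "Lplus W a x = e0 * b x" for x
    using Lop_eigenfunction_parts[OF assms(12)[rule_format, of x]]
    unfolding a_def[abs_def] b_def[abs_def] by simp_all
  have "Ym = (\<lambda>x. cnj (Yp x))"
    using assms(14) by (metis complex_cnj_cnj)
  then have "integral\<^sup>L lborel (\<lambda>x. a x * b x) = 0"
    using \<open>Bform W Yp Ym = 0\<close> Bform_cnj_eigenfunction[of W Yp e0] assms(5,12)
    by (simp add: a_def b_def)
  moreover have "b x * (laplacian W x / W x * b x - laplacian b x) = - e0 * (a x * b x)" for x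
    by (simp only: Lminus_eq[symmetric] eigen(1)) (simp add: algebra_simps)
  ultimately have "integral\<^sup>L lborel (\<lambda>x. b x * (laplacian W x / W x * b x - laplacian b x)) = 0"
    by simp
  moreover have "radial W"
    unfolding W_eq radial_def by simp
  moreover have "radial b"
    using assms(8) unfolding radial_def b_def by metis
  ultimately obtain c where "\<And>x. b x = c * W x"
    using proportional_if_radial_ratio_deriv_eq_0 ratio_deriv_eq_0_if_form_eq_0 by blast
  then have "b = (\<lambda>x. c * W x)"
    by (rule ext)
  then have "Lminus W b x = 0" for x
    using W_nonzero[of x] by (simp add: Lminus_eq laplacian_cmult[OF W_C2])
  then have "a = (\<lambda>_. 0)"
    using eigen(1) assms(5) by (simp add: fun_eq_iff)
  then have "b x = 0" for x
    using eigen(2)[of x] assms(5) by (simp add: Lplus_zero)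
  then show False
    using assms(10) \<open>a = (\<lambda>_. 0)\<close> by (auto simp: a_def b_def fun_eq_iff complex_eq_iff)
qed

end
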